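(* Let $\mathcal{X}$ be a symmetric configuration $v_3$ having a blocking set $Q$ of cardinality $q$, where $\lceil v/3\rceil\leq q<\lfloor v/2\rfloor$. Then $\mathcal{X}$ also has a blocking set of cardinality $q+1$.
   Context: A symmetric configuration $v_3$ consists of a set of $v$ points and a collection of $v$ blocks, each block being a 3-element subset of the points, such that every point lies in exactly 3 blocks and any two distinct points lie in at most one common block. A blocking set of such a configuration is a subset $Q$ of the points such that every block contains at least one point of $Q$ and at least one point not in $Q$. *)

theory Defs
  imports Main
begin

definition sym_config_v3 :: "'a set \<Rightarrow> 'a set set \<Rightarrow> bool" where
  "sym_config_v3 P B \<longleftrightarrow>
     finite P \<and> finite B \<and> card B = card P \<and>
     (\<forall>b\<in>B. b \<subseteq> P \<and> card b = 3) \<and>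
     (\<forall>x\<in>P. card {b\<in>B. x \<in> b} = 3) \<and>
     (\<forall>x\<in>P. \<forall>y\<in>P. x \<noteq> y \<longrightarrow> card {b\<in>B. x \<in> b \<and> y \<in> b} \<le> 1)"

definition blocking_set :: "'a set \<Rightarrow> 'a set set \<Rightarrow> 'a set \<Rightarrow> bool" where
  "blocking_set P B Q \<longleftrightarrow>
     Q \<subseteq> P \<and> (\<forall>b\<in>B. b \<inter> Q \<noteq> {} \<and> b - Q \<noteq> {})"

end

theory Submission
  imports Defs
begin

text \<open>Count incidences between Q and the blocks: every point of Q lies in 3 blocks, and every
block meets Q in 1 or 2 points, so 3 |Q| = v + t, where t is the number of blocks with a single
point outside Q. Such a block forbids adding its outside point to Q, and there are only
t = 3q - v of them. When q < v/2 this is fewer than the v - q points outside Q, so some outside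
point can be added to Q without destroying the blocking property.\<close>

lemma sum_card_incident_eq_sum_card_Int:
  assumes "finite Q" "finite B"
  shows "(\<Sum>x\<in>Q. card {b\<in>B. x \<in> b}) = (\<Sum>b\<in>B. card (b \<inter> Q))"
proof -
  have "(\<Sum>x\<in>Q. card {b\<in>B. x \<in> b}) = (\<Sum>x\<in>Q. \<Sum>b\<in>B. if x \<in> b then 1 else 0)"
    using assms by (simp add: sum.If_cases Int_def conj_commute)
  also have "\<dots> = (\<Sum>b\<in>B. \<Sum>x\<in>Q. if x \<in> b then 1 else 0)"
    by (rule sum.swap)
  also have "\<dots> = (\<Sum>b\<in>B. card (b \<inter> Q))"
  proof (rule sum.cong)
    fix b assume "b \<in> B"
    have "{x\<in>Q. x \<in> b} = b \<inter> Q" by blast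
    then show "(\<Sum>x\<in>Q. if x \<in> b then 1 else 0) = card (b \<inter> Q)"
      using assms by (simp add: sum.If_cases Int_commute)
  qed simp
  finally show ?thesis .
qed

lemma blocking_set_card_eq:
  assumes "finite P" "finite B"
    and blocks: "\<And>b. b \<in> B \<Longrightarrow> b \<subseteq> P \<and> card b = 3"
    and degree: "\<And>x. x \<in> P \<Longrightarrow> card {b\<in>B. x \<in> b} = 3"
    and "blocking_set P B Q"
  shows "3 * card Q = card B + card {b\<in>B. card (b - Q) = 1}"
proof -
  define T where "T = {b\<in>B. card (b - Q) = 1}"
  have QP: "Q \<subseteq> P" and meets: "\<And>b. b \<in> B \<Longrightarrow> b \<inter> Q \<noteq> {} \<and> b - Q \<noteq> {}"
    using assms(5) unfolding blocking_set_def by auto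
  have "finite Q" using QP \<open>finite P\<close> finite_subset by blast
  have card_Int: "card (b \<inter> Q) = 1 + (if b \<in> T then 1 else 0)" if "b \<in> B" for b
  proof -
    have "finite b" using blocks[OF that] card.infinite by force
    then have "card b = card (b \<inter> Q) + card (b - Q)"
      by (rule card_Int_Diff)
    moreover have "card (b \<inter> Q) \<noteq> 0" "card (b - Q) \<noteq> 0"
      using meets[OF that] \<open>finite b\<close> by auto
    ultimately show ?thesis using blocks[OF that] that unfolding T_def by auto
  qed
  have "3 * card Q = (\<Sum>x\<in>Q. card {b\<in>B. x \<in> b})"
    using degree QP by (simp add: subset_iff)
  also have "\<dots> = (\<Sum>b\<in>B. card (b \<inter> Q))"
    using sum_card_incident_eq_sum_card_Int \<open>finite Q\<close> \<open>finite B\<close> by blast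
  also have "\<dots> = (\<Sum>b\<in>B. 1 + (if b \<in> T then 1 else 0))"
    using card_Int by simp
  also have "\<dots> = card B + (\<Sum>b\<in>B. if b \<in> T then 1 else 0)"
    by (subst sum.distrib) simp
  also have "(\<Sum>b\<in>B. if b \<in> T then 1 else 0) = card (B \<inter> T)"
    using \<open>finite B\<close> by (simp add: sum.If_cases)
  also have "B \<inter> T = T" unfolding T_def by blast
  finally show ?thesis unfolding T_def .
qed

lemma blocking_set_insert:
  assumes "blocking_set P B Q" "x \<in> P" "\<forall>b\<in>B. b - Q \<noteq> {x}"
  shows "blocking_set P B (insert x Q)"
  unfolding blocking_set_def
proof (intro conjI ballI)
  show "insert x Q \<subseteq> P" using assms(1,2) unfolding blocking_set_def by blast
next
  fix b assume "b \<in> B"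
  then have "b \<inter> Q \<noteq> {}" "b - Q \<noteq> {}" "b - Q \<noteq> {x}"
    using assms(1,3) unfolding blocking_set_def by auto
  then show "b \<inter> insert x Q \<noteq> {}" "b - insert x Q \<noteq> {}" by blast+
qed

lemma blocking_set_extend:
  assumes "blocking_set P B Q" "finite B"
    and "card {b\<in>B. card (b - Q) = 1} < card (P - Q)"
  shows "\<exists>x\<in>P - Q. blocking_set P B (insert x Q)"
proof -
  define T where "T = {b\<in>B. card (b - Q) = 1}"
  have "finite T" using \<open>finite B\<close> unfolding T_def by simp
  have "\<not> P - Q \<subseteq> (\<lambda>b. the_elem (b - Q)) ` T"
  proof
    assume "P - Q \<subseteq> (\<lambda>b. the_elem (b - Q)) ` T"
    then have "card (P - Q) \<le> card T"
      using le_trans[OF card_mono[OF finite_imageI[OF \<open>finite T\<close>]] card_image_le[OF \<open>finite T\<close>]]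
      by blast
    with assms(3) show False unfolding T_def by linarith
  qed
  then obtain x where x: "x \<in> P - Q" "x \<notin> (\<lambda>b. the_elem (b - Q)) ` T" by blast
  have "\<forall>b\<in>B. b - Q \<noteq> {x}"
  proof (intro ballI notI)
    fix b assume "b \<in> B" "b - Q = {x}"
    then have "b \<in> T" "x = the_elem (b - Q)" unfolding T_def by simp_all
    with x(2) show False by blast
  qed
  with x(1) show ?thesis using blocking_set_insert[OF assms(1)] by blast
qed

theorem mainTheorem1:
  fixes P :: "'a set" and B :: "'a set set" and Q :: "'a set" and q :: nat
  assumes "sym_config_v3 P B"
    and "blocking_set P B Q"
    and "card Q = q"
    and "(card P + 2) div 3 \<le> q"
    and "q < card P div 2"
  shows "\<exists>Q'. blocking_set P B Q' \<and> card Q' = q + 1"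
proof -
  have "finite P" "finite B" and "card B = card P"
    and blocks: "\<And>b. b \<in> B \<Longrightarrow> b \<subseteq> P \<and> card b = 3"
    and degree: "\<And>x. x \<in> P \<Longrightarrow> card {b\<in>B. x \<in> b} = 3"
    using assms(1) unfolding sym_config_v3_def by auto
  have "3 * card Q = card B + card {b\<in>B. card (b - Q) = 1}"
    using \<open>finite P\<close> \<open>finite B\<close> blocks degree assms(2) by (rule blocking_set_card_eq)
  then have tangents: "3 * q = card P + card {b\<in>B. card (b - Q) = 1}"
    using \<open>card B = card P\<close> assms(3) by simp
  have "Q \<subseteq> P" using assms(2) unfolding blocking_set_def by blast
  then have "card (P - Q) = card P - q"
    using \<open>finite P\<close> assms(3) card_Diff_subset finite_subset by metis
  moreover have "2 * (card P div 2) \<le> card P" by simp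
  ultimately have "card {b\<in>B. card (b - Q) = 1} < card (P - Q)"
    using tangents assms(5) by linarith
  then obtain x where "x \<in> P - Q" "blocking_set P B (insert x Q)"
    using blocking_set_extend assms(2) \<open>finite B\<close> by blast
  moreover have "finite Q" using \<open>Q \<subseteq> P\<close> \<open>finite P\<close> finite_subset by blast
  ultimately have "card (insert x Q) = q + 1" using assms(3) by simp
  with \<open>blocking_set P B (insert x Q)\<close> show ?thesis by blast
qed

end
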